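(* For a wiretap set $W\in\mathcal W_r$, let $C^*_W$ be the primary minimum cut separating $\rho$ from $D_W$ in the residual graph $\mathcal G_W$. Then $|C^*_W|=\Omega(W)$.
   Context: $\mathcal G=(\mathcal V,\mathcal E)$ is a finite directed acyclic graph (multiple edges allowed); $S$ is the set of source nodes (exactly the nodes without input edges), $\rho\notin S$ the sink (no output edges), and every node other than $\rho$ has a directed path to $\rho$. For a node $\sigma$ and edge $e$, $\sigma\to e$ means there is a directed path from $\sigma$ whose last edge is $e$. For $C\subseteq\mathcal E$: $D_C=\{\sigma\in S:\exists e\in C,\ \sigma\to e\}$, $I_C=\{\sigma\in S:$ no path from $\sigma$ to $\rho$ after deleting $C\}$; $\Lambda(\mathcal N)=\{C\subseteq\mathcal E:I_C\neq\emptyset\}$. $\mathcal W_r=\{W\subseteq\mathcal E:|W|\le r\}$ for a nonnegative integer $r$. For $W\subseteq\mathcal E$, $\Omega(W)=\min\{|C|-|W|: C\in\Lambda(\mathcal N),\ W\subseteq C,\ D_W\subseteq I_C\}$. $\mathcal G_W$ is the graph obtained from $\mathcal G$ by deleting the edges of $W$. In a graph, a cut separating node $\rho$ from a node set $U$ is an edge set whose deletion leaves no path from any node of $U$ to $\rho$; a minimum cut has minimum size, and the primary minimum cut is the (unique) minimum cut that separates from $U$ every minimum cut separating $\rho$ from $U$ (an edge set $X$ is separated from $U$ by $C$ if every path from a node of $U$ to an edge of $X$ uses an edge of $C$). *)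

theory Defs
  imports Main
begin

text \<open>A finite directed multigraph: nodes V, edges E (abstract edge identifiers,
so parallel edges are allowed), tail tail and head head of each edge.\<close>

definition epath :: "'e set \<Rightarrow> ('e \<Rightarrow> 'v) \<Rightarrow> ('e \<Rightarrow> 'v) \<Rightarrow> 'e list \<Rightarrow> bool" where
  "epath F tail head es \<longleftrightarrow> es \<noteq> [] \<and> set es \<subseteq> F \<and>
     (\<forall>i. Suc i < length es \<longrightarrow> head (es ! i) = tail (es ! Suc i))"

definition reach :: "'e set \<Rightarrow> ('e \<Rightarrow> 'v) \<Rightarrow> ('e \<Rightarrow> 'v) \<Rightarrow> 'v \<Rightarrow> 'v \<Rightarrow> bool" where
  "reach F tail head u v \<longleftrightarrow> u = v \<or>
     (\<exists>es. epath F tail head es \<and> tail (List.hd es) = u \<and> head (last es) = v)"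

definition reaches_edge :: "'e set \<Rightarrow> ('e \<Rightarrow> 'v) \<Rightarrow> ('e \<Rightarrow> 'v) \<Rightarrow> 'v \<Rightarrow> 'e \<Rightarrow> bool" where
  "reaches_edge F tail head \<sigma> e \<longleftrightarrow>
     (\<exists>es. epath F tail head es \<and> tail (List.hd es) = \<sigma> \<and> last es = e)"

definition network :: "'v set \<Rightarrow> 'e set \<Rightarrow> ('e \<Rightarrow> 'v) \<Rightarrow> ('e \<Rightarrow> 'v) \<Rightarrow> 'v set \<Rightarrow> 'v \<Rightarrow> bool" where
  "network V E tail head S \<rho> \<longleftrightarrow>
     finite V \<and> finite E \<and> (\<forall>e\<in>E. tail e \<in> V \<and> head e \<in> V) \<and>
     \<not> (\<exists>es. epath E tail head es \<and> tail (List.hd es) = head (last es)) \<and>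
     S = {v \<in> V. \<not> (\<exists>e\<in>E. head e = v)} \<and>
     \<rho> \<in> V \<and> \<rho> \<notin> S \<and> \<not> (\<exists>e\<in>E. tail e = \<rho>) \<and>
     (\<forall>v\<in>V. v \<noteq> \<rho> \<longrightarrow> reach E tail head v \<rho>)"

definition D_set :: "'e set \<Rightarrow> ('e \<Rightarrow> 'v) \<Rightarrow> ('e \<Rightarrow> 'v) \<Rightarrow> 'v set \<Rightarrow> 'e set \<Rightarrow> 'v set" where
  "D_set E tail head S C = {\<sigma> \<in> S. \<exists>e\<in>C. reaches_edge E tail head \<sigma> e}"

definition I_set :: "'e set \<Rightarrow> ('e \<Rightarrow> 'v) \<Rightarrow> ('e \<Rightarrow> 'v) \<Rightarrow> 'v set \<Rightarrow> 'v \<Rightarrow> 'e set \<Rightarrow> 'v set" where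
  "I_set E tail head S \<rho> C = {\<sigma> \<in> S. \<not> reach (E - C) tail head \<sigma> \<rho>}"

definition Lambda :: "'e set \<Rightarrow> ('e \<Rightarrow> 'v) \<Rightarrow> ('e \<Rightarrow> 'v) \<Rightarrow> 'v set \<Rightarrow> 'v \<Rightarrow> 'e set set" where
  "Lambda E tail head S \<rho> = {C. C \<subseteq> E \<and> I_set E tail head S \<rho> C \<noteq> {}}"

definition wiretap_sets :: "'e set \<Rightarrow> nat \<Rightarrow> 'e set set" where
  "wiretap_sets E r = {W. W \<subseteq> E \<and> card W \<le> r}"

definition Omega :: "'e set \<Rightarrow> ('e \<Rightarrow> 'v) \<Rightarrow> ('e \<Rightarrow> 'v) \<Rightarrow> 'v set \<Rightarrow> 'v \<Rightarrow> 'e set \<Rightarrow> nat" where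
  "Omega E tail head S \<rho> W = Min {card C - card W | C.
      C \<in> Lambda E tail head S \<rho> \<and> W \<subseteq> C \<and> D_set E tail head S W \<subseteq> I_set E tail head S \<rho> C}"

definition is_cut :: "'e set \<Rightarrow> ('e \<Rightarrow> 'v) \<Rightarrow> ('e \<Rightarrow> 'v) \<Rightarrow> 'v set \<Rightarrow> 'v \<Rightarrow> 'e set \<Rightarrow> bool" where
  "is_cut F tail head U \<rho> X \<longleftrightarrow> X \<subseteq> F \<and> (\<forall>u\<in>U. \<not> reach (F - X) tail head u \<rho>)"

definition is_min_cut :: "'e set \<Rightarrow> ('e \<Rightarrow> 'v) \<Rightarrow> ('e \<Rightarrow> 'v) \<Rightarrow> 'v set \<Rightarrow> 'v \<Rightarrow> 'e set \<Rightarrow> bool" where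
  "is_min_cut F tail head U \<rho> X \<longleftrightarrow> is_cut F tail head U \<rho> X \<and>
     (\<forall>Y. is_cut F tail head U \<rho> Y \<longrightarrow> card X \<le> card Y)"

definition separated_by :: "'e set \<Rightarrow> ('e \<Rightarrow> 'v) \<Rightarrow> ('e \<Rightarrow> 'v) \<Rightarrow> 'v set \<Rightarrow> 'e set \<Rightarrow> 'e set \<Rightarrow> bool" where
  "separated_by F tail head U C X \<longleftrightarrow>
     (\<forall>u\<in>U. \<forall>x\<in>X. \<forall>es. epath F tail head es \<and> tail (List.hd es) = u \<and> last es = x
        \<longrightarrow> set es \<inter> C \<noteq> {})"

definition is_primary_min_cut :: "'e set \<Rightarrow> ('e \<Rightarrow> 'v) \<Rightarrow> ('e \<Rightarrow> 'v) \<Rightarrow> 'v set \<Rightarrow> 'v \<Rightarrow> 'e set \<Rightarrow> bool" where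
  "is_primary_min_cut F tail head U \<rho> C \<longleftrightarrow> is_min_cut F tail head U \<rho> C \<and>
     (\<forall>C'. is_min_cut F tail head U \<rho> C' \<longrightarrow> separated_by F tail head U C C')"

end

theory Submission
  imports Defs
begin

text \<open>Removing the wiretapped edges W turns the defining optimisation of \<open>\<Omega>(W)\<close> into a
  plain cut problem in the residual graph: \<open>C \<mapsto> C - W\<close> and \<open>X \<mapsto> X \<union> W\<close> translate between
  cuts C of the original graph with \<open>W \<subseteq> C\<close> and \<open>D\<^sub>W \<subseteq> I\<^sub>C\<close>, and cuts X of \<open>\<G>\<^sub>W\<close> separating
  \<open>\<rho>\<close> from \<open>D\<^sub>W\<close>, with \<open>|C| - |W| = |X|\<close>. The only side condition is \<open>I\<^sub>C \<noteq> {}\<close>, which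
  holds because \<open>D\<^sub>W \<noteq> {}\<close>: in an acyclic graph every edge is reached from a source.
  Hence \<open>\<Omega>(W)\<close> is the size of a minimum cut of \<open>\<G>\<^sub>W\<close>.\<close>

lemma epath_snoc:
  assumes "epath F tail head es" "g \<in> F" "head (last es) = tail g"
  shows "epath F tail head (es @ [g])"
  unfolding epath_def
proof (intro conjI allI impI)
  show "es @ [g] \<noteq> []" by simp
  show "set (es @ [g]) \<subseteq> F" using assms unfolding epath_def by auto
  fix i assume i: "Suc i < length (es @ [g])"
  have "es \<noteq> []" using assms(1) unfolding epath_def by simp
  show "head ((es @ [g]) ! i) = tail ((es @ [g]) ! Suc i)"
  proof (cases "Suc i < length es")
    case True
    then show ?thesis using assms(1) unfolding epath_def by (simp add: nth_append)
  next
    case False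
    with i have "i = length es - 1" by simp
    with assms(3) \<open>es \<noteq> []\<close> show ?thesis by (simp add: nth_append last_conv_nth)
  qed
qed

lemma epath_of_trancl_successor:
  assumes "(f, g) \<in> {(f, g). f \<in> F \<and> g \<in> F \<and> head f = tail g}\<^sup>+"
  shows "\<exists>es. epath F tail head es \<and> hd es = f \<and> head (last es) = tail g"
  using assms
proof (induction rule: trancl_induct)
  case (base g)
  then have "epath F tail head [f]" unfolding epath_def by auto
  with base show ?case by force
next
  case (step g h)
  then obtain es where es: "epath F tail head es" "hd es = f" "head (last es) = tail g"
    by blast
  with step have "epath F tail head (es @ [g])" by (blast intro: epath_snoc)
  moreover have "hd (es @ [g]) = f" using es unfolding epath_def by simp
  ultimately show ?case using step by force
qed

lemma network_acyclic_successor: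
  assumes "network V E tail head S \<rho>"
  shows "acyclic {(f, g). f \<in> E \<and> g \<in> E \<and> head f = tail g}"
  unfolding acyclic_def
proof
  fix f
  show "(f, f) \<notin> {(f, g). f \<in> E \<and> g \<in> E \<and> head f = tail g}\<^sup>+"
  proof
    assume "(f, f) \<in> {(f, g). f \<in> E \<and> g \<in> E \<and> head f = tail g}\<^sup>+"
    then obtain es where "epath E tail head es" "hd es = f" "head (last es) = tail f"
      by (blast dest: epath_of_trancl_successor)
    moreover have "\<nexists>es. epath E tail head es \<and> tail (hd es) = head (last es)"
      using assms unfolding network_def by (elim conjE)
    ultimately show False by auto
  qed
qed

lemma network_source_reaches_edge:
  assumes net: "network V E tail head S \<rho>" and "e \<in> E"
  shows "\<exists>\<sigma>\<in>S. reaches_edge E tail head \<sigma> e"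
proof -
  define R where "R = {(f, g). f \<in> E \<and> g \<in> E \<and> head f = tail g}"
  have "finite E" using net unfolding network_def by simp
  moreover have "R \<subseteq> E \<times> E" unfolding R_def by blast
  ultimately have "finite R" by (blast intro: finite_subset)
  then have "wf R"
    using network_acyclic_successor[OF net] unfolding R_def[symmetric]
    by (rule finite_acyclic_wf)
  have "g \<in> E \<longrightarrow> (\<exists>\<sigma>\<in>S. reaches_edge E tail head \<sigma> g)" for g
  proof (induction g rule: wf_induct_rule[OF \<open>wf R\<close>])
    case (1 g)
    show ?case
    proof
      assume "g \<in> E"
      show "\<exists>\<sigma>\<in>S. reaches_edge E tail head \<sigma> g"
      proof (cases "\<exists>f\<in>E. head f = tail g")
        case True
        then obtain f where "f \<in> E" "head f = tail g" by blast
        with \<open>g \<in> E\<close> have "(f, g) \<in> R" unfolding R_def by simp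
        with 1 \<open>f \<in> E\<close> obtain \<sigma> es where
          es: "\<sigma> \<in> S" "epath E tail head es" "tail (hd es) = \<sigma>" "last es = f"
          unfolding reaches_edge_def by blast
        with \<open>g \<in> E\<close> \<open>head f = tail g\<close> have "epath E tail head (es @ [g])"
          by (blast intro: epath_snoc)
        moreover have "tail (hd (es @ [g])) = \<sigma>" using es unfolding epath_def by simp
        ultimately show ?thesis using es(1) unfolding reaches_edge_def by force
      next
        case False
        with net \<open>g \<in> E\<close> have "tail g \<in> S" unfolding network_def by auto
        moreover have "reaches_edge E tail head (tail g) g"
          unfolding reaches_edge_def epath_def using \<open>g \<in> E\<close> by (intro exI[of _ "[g]"]) auto
        ultimately show ?thesis by blast
      qed
    qed
  qed
  with \<open>e \<in> E\<close> show ?thesis by blast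
qed

lemma D_set_nonempty:
  assumes "network V E tail head S \<rho>" "W \<subseteq> E" "W \<noteq> {}"
  shows "D_set E tail head S W \<noteq> {}"
proof -
  from \<open>W \<noteq> {}\<close> obtain e where "e \<in> W" by blast
  with assms(2) obtain \<sigma> where "\<sigma> \<in> S" "reaches_edge E tail head \<sigma> e"
    using network_source_reaches_edge[OF assms(1)] by blast
  with \<open>e \<in> W\<close> show ?thesis unfolding D_set_def by blast
qed

lemma Omega_candidates_eq_residual_cut_cards:
  assumes "finite E" "W \<subseteq> E" "D_set E tail head S W \<noteq> {}"
  shows "{card C - card W | C. C \<in> Lambda E tail head S \<rho> \<and> W \<subseteq> C \<and>
            D_set E tail head S W \<subseteq> I_set E tail head S \<rho> C}
         = card ` {X. is_cut (E - W) tail head (D_set E tail head S W) \<rho> X}"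
    (is "?candidates = card ` {X. is_cut (E - W) tail head ?D \<rho> X}")
proof (intro equalityI subsetI)
  have "finite W" using assms(1,2) by (rule finite_subset[rotated])
  have "?D \<subseteq> S" unfolding D_set_def by blast
  fix n
  {
    assume "n \<in> ?candidates"
    then obtain C where C: "n = card C - card W" "C \<subseteq> E" "W \<subseteq> C"
      "?D \<subseteq> I_set E tail head S \<rho> C"
      unfolding Lambda_def by blast
    have residual: "E - W - (C - W) = E - C" using C(3) by blast
    have "is_cut (E - W) tail head ?D \<rho> (C - W)"
      using C(2,4) unfolding is_cut_def residual I_set_def by blast
    moreover have "n = card (C - W)" using C(1,3) \<open>finite W\<close> by (simp add: card_Diff_subset)
    ultimately show "n \<in> card ` {X. is_cut (E - W) tail head ?D \<rho> X}" by blast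
  next
    assume "n \<in> card ` {X. is_cut (E - W) tail head ?D \<rho> X}"
    then obtain X where X: "n = card X" "is_cut (E - W) tail head ?D \<rho> X" by blast
    have "finite X" using X(2) assms(1) unfolding is_cut_def by (blast intro: finite_subset)
    have "X \<inter> W = {}" using X(2) unfolding is_cut_def by blast
    have "E - (X \<union> W) = E - W - X" by blast
    then have "?D \<subseteq> I_set E tail head S \<rho> (X \<union> W)"
      using X(2) \<open>?D \<subseteq> S\<close> unfolding is_cut_def I_set_def by auto
    moreover have "X \<union> W \<subseteq> E" using X(2) assms(2) unfolding is_cut_def by blast
    moreover have "n = card (X \<union> W) - card W"
      using X(1) \<open>finite X\<close> \<open>finite W\<close> \<open>X \<inter> W = {}\<close> by (simp add: card_Un_disjoint)
    ultimately show "n \<in> ?candidates"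
      using assms(3) unfolding Lambda_def by blast
  }
qed

lemma min_cut_card_eq_Min:
  assumes "finite F" "is_min_cut F tail head U \<rho> C"
  shows "card C = Min (card ` {X. is_cut F tail head U \<rho> X})"
proof (rule Min_eqI[symmetric])
  have "{X. is_cut F tail head U \<rho> X} \<subseteq> Pow F" unfolding is_cut_def by blast
  with assms(1) show "finite (card ` {X. is_cut F tail head U \<rho> X})"
    by (blast intro: finite_subset)
qed (use assms(2) in \<open>auto simp: is_min_cut_def\<close>)

theorem lemma7:
  fixes V :: "'v set" and E :: "'e set" and tail head :: "'e \<Rightarrow> 'v"
    and S :: "'v set" and \<rho> :: 'v and r :: nat and W C :: "'e set"
  assumes "network V E tail head S \<rho>"
    and "W \<in> wiretap_sets E r"
    and "W \<noteq> {}"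
    and "is_primary_min_cut (E - W) tail head (D_set E tail head S W) \<rho> C"
  shows "card C = Omega E tail head S \<rho> W"
proof -
  have "finite E" using assms(1) unfolding network_def by simp
  have "W \<subseteq> E" using assms(2) unfolding wiretap_sets_def by simp
  have "is_min_cut (E - W) tail head (D_set E tail head S W) \<rho> C"
    using assms(4) unfolding is_primary_min_cut_def by simp
  with \<open>finite E\<close> have "card C = Min (card ` {X. is_cut (E - W) tail head (D_set E tail head S W) \<rho> X})"
    by (simp add: min_cut_card_eq_Min)
  also have "\<dots> = Omega E tail head S \<rho> W"
    unfolding Omega_def
    using Omega_candidates_eq_residual_cut_cards[OF \<open>finite E\<close> \<open>W \<subseteq> E\<close>
        D_set_nonempty[OF assms(1) \<open>W \<subseteq> E\<close> assms(3)]]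
    by simp
  finally show ?thesis .
qed

end
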